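(* Let $M\ge 4N-2$. Then for a generic $M$-element frame $\mathcal F=\{f_1,\dots,f_M\}$ for $\mathbb C^N$, the map $\mathbb M^{\mathcal F}$ is injective, i.e. $|\langle x,f_k\rangle|=|\langle y,f_k\rangle|$ for all $k$ implies $y=cx$ for some $c\in\mathbb C$ with $|c|=1$.
   Context: An $M$-element frame for $\mathbb C^N$ is a spanning family $\{f_1,\dots,f_M\}\subset\mathbb C^N$, with $\langle x,y\rangle=\sum_k x_k\overline{y_k}$; "generic" means for all frames in an open dense subset of the set of such frames (topology induced from the range of coefficients $W=\{(\langle x,f_k\rangle)_k\}$ in the complex Grassmannian $Gr(N,M)^{\mathbb C}$). $\mathbb M^{\mathcal F}:\mathbb C^N/\mathbb T^1\to\mathbb R^M$, $\hat x\mapsto(|\langle x,f_k\rangle|)_k$, where $x\sim y$ iff $y=cx$ with $|c|=1$. *)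

theory Defs
  imports "HOL-Analysis.Analysis"
begin

definition cinner :: "complex ^ 'n \<Rightarrow> complex ^ 'n \<Rightarrow> complex" where
  "cinner x y = (\<Sum>i\<in>UNIV. x $ i * cnj (y $ i))"

text \<open>An M-element family in C^N is encoded as F :: complex^'n^'m, with f_k = F $ k.
  It is a frame iff it spans C^N over the complex numbers.\<close>
definition is_frame :: "complex ^ 'n ^ 'm \<Rightarrow> bool" where
  "is_frame F \<longleftrightarrow> (\<forall>y::complex ^ 'n. \<exists>c::'m \<Rightarrow> complex. y = (\<Sum>k\<in>UNIV. c k *s F $ k))"

definition frames :: "(complex ^ 'n ^ 'm) set" where
  "frames = {F. is_frame F}"

text \<open>Analysis operator and its range W (a point of the Grassmannian).\<close>
definition analysis :: "complex ^ 'n ^ 'm \<Rightarrow> complex ^ 'n \<Rightarrow> complex ^ 'm" where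
  "analysis F x = (\<chi> k. cinner x (F $ k))"

definition coeff_range :: "complex ^ 'n ^ 'm \<Rightarrow> (complex ^ 'm) set" where
  "coeff_range F = range (analysis F)"

definition magnitude_injective :: "complex ^ 'n ^ 'm \<Rightarrow> bool" where
  "magnitude_injective F \<longleftrightarrow>
     (\<forall>x y. (\<forall>k. cmod (cinner x (F $ k)) = cmod (cinner y (F $ k)))
        \<longrightarrow> (\<exists>c. cmod c = 1 \<and> y = c *s x))"

text \<open>A property holds for generic frames iff it holds on an open dense subset of the frames,
  in the topology induced from the Grassmannian via F \<mapsto> coeff_range F.  With the
  Grassmannian carrying the quotient topology of full-rank matrices modulo GL_N, the open
  sets of this induced topology are exactly the (Euclidean) open subsets of the frames
  that are saturated, i.e. depend only on coeff_range F; density w.r.t. saturated opens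
  is equivalent to Euclidean density (saturations of opens are open).\<close>
definition generic_frames :: "(complex ^ 'n ^ 'm \<Rightarrow> bool) \<Rightarrow> bool" where
  "generic_frames P \<longleftrightarrow>
     (\<exists>S. S \<subseteq> frames \<and> openin (top_of_set frames) S
        \<and> (\<forall>F\<in>frames. \<forall>G\<in>frames. coeff_range F = coeff_range G \<longrightarrow> (F \<in> S \<longleftrightarrow> G \<in> S))
        \<and> frames \<subseteq> closure S
        \<and> (\<forall>F\<in>S. P F))"

end

theory Submission
  imports Defs
begin

text \<open>
  Openness: F fails to be magnitude injective iff there are unit vectors s, d with
  Im <d, s> = 0 and Re (<s, f_k> * cnj <d, f_k>) = 0 for all k (take s, d proportional to
  x + y and x - y, and use that |a + b| = |a - b| iff Re (a * cnj b) = 0).  These pairs form a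
  compact set, so the failing F form a closed set.

  Density: a failing F comes with x, y normalised by x_j = 1 and Im y_j = 0 (4N - 3 real
  parameters), unimodular c_k = cis theta_k with <x, f_k> = c_k <y, f_k> (M parameters) and
  f_k orthogonal to w_k = x - c_k y (2N - 2 real parameters each).  Hence the failing F lie in
  finitely many smooth images of a hyperplane in the 2MN-dimensional real space of M x N
  matrices, which is possible because 4N - 3 + M (2N - 1) <= 2MN - 1 iff M >= 4N - 2.  Such
  images are null sets, and a null set has empty interior.

  Saturation holds because magnitude injectivity of a frame only depends on the range of its
  analysis operator.
\<close>

section \<open>The complex inner product\<close>

lemma scaleR_eq_scale_of_real: "r *\<^sub>R x = complex_of_real r *s x"
  by (simp only: vec_eq_iff vector_scaleR_component vector_smult_component)
    (simp add: scaleR_conv_of_real)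

lemma cinner_scale_left: "cinner (c *s x) y = c * cinner x y"
  by (simp add: cinner_def sum_distrib_left mult.assoc)

lemma cinner_scale_right: "cinner x (c *s y) = cnj c * cinner x y"
  by (simp add: cinner_def sum_distrib_left algebra_simps)

lemma cinner_scaleR_left: "cinner (r *\<^sub>R x) y = of_real r * cinner x y"
  by (simp add: scaleR_eq_scale_of_real cinner_scale_left)

lemma cinner_add_left: "cinner (x + y) z = cinner x z + cinner y z"
  by (simp add: cinner_def sum.distrib algebra_simps)

lemma cinner_diff_left: "cinner (x - y) z = cinner x z - cinner y z"
  by (simp add: cinner_def sum_subtractf algebra_simps)

lemma cinner_add_right: "cinner x (y + z) = cinner x y + cinner x z"
  by (simp add: cinner_def sum.distrib algebra_simps)

lemma cinner_commute: "cinner y x = cnj (cinner x y)"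
  by (simp add: cinner_def mult.commute)

lemma cinner_zero_left [simp]: "cinner 0 y = 0"
  by (simp add: cinner_def)

lemma cinner_sum_right: "cinner x (\<Sum>k\<in>A. f k) = (\<Sum>k\<in>A. cinner x (f k))"
  by (induction A rule: infinite_finite_induct)
    (simp_all add: cinner_add_right, simp_all add: cinner_def)

lemma inner_eq_Re_cinner: "inner x y = Re (cinner x y)"
  by (simp add: inner_vec_def cinner_def inner_complex_def Re_sum)

lemma cinner_self: "cinner x x = of_real ((norm x)\<^sup>2)"
proof -
  have "cinner x x = (\<Sum>i\<in>UNIV. of_real ((cmod (x$i))\<^sup>2))"
    unfolding cinner_def by (rule sum.cong, simp, rule complex_norm_square[symmetric])
  also have "\<dots> = of_real ((norm x)\<^sup>2)"
    by (simp add: norm_vec_def L2_set_def sum_nonneg)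
  finally show ?thesis .
qed

lemma cinner_self_eq_0 [simp]: "cinner x x = 0 \<longleftrightarrow> x = 0"
  by (simp add: cinner_self)

lemma continuous_on_cinner [continuous_intros]:
  "continuous_on S f \<Longrightarrow> continuous_on S g \<Longrightarrow> continuous_on S (\<lambda>q. cinner (f q) (g q))"
  unfolding cinner_def by (intro continuous_intros)

section \<open>Frames and the analysis operator\<close>

definition synthesis :: "complex ^ 'n ^ 'm \<Rightarrow> complex ^ 'm \<Rightarrow> complex ^ 'n" where
  "synthesis F c = (\<Sum>k\<in>UNIV. c $ k *s F $ k)"

lemma is_frame_iff_surj_synthesis: "is_frame F \<longleftrightarrow> surj (synthesis F)"
  unfolding is_frame_def synthesis_def surj_def
  by (metis (no_types, lifting) sum.cong vec_lambda_beta)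

lemma linear_synthesis: "linear (synthesis F)"
  by (rule linearI)
    (simp_all add: synthesis_def vec_eq_iff sum_component sum.distrib ring_distribs
      vector_scaleR_component scaleR_sum_right)

lemma synthesis_axis: "synthesis F (axis k c) = c *s F $ k"
  by (simp add: synthesis_def axis_def if_distrib[where f="\<lambda>a. a *s _"] cong: if_cong)

lemma not_frame_obtains_orthogonal:
  assumes "\<not> is_frame F"
  obtains x where "x \<noteq> 0" "\<And>k. cinner x (F $ k) = 0"
proof -
  let ?W = "range (synthesis F)"
  have "span ?W = ?W"
    using linear_subspace_image[OF linear_synthesis subspace_UNIV] by (simp add: span_eq_iff)
  moreover have "?W \<noteq> UNIV"
    using assms by (simp add: is_frame_iff_surj_synthesis)
  ultimately have "span ?W \<subset> span UNIV"
    by (metis span_UNIV psubsetI subset_UNIV)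
  then obtain x where x: "x \<noteq> 0" "\<And>y. y \<in> span ?W \<Longrightarrow> orthogonal x y"
    by (rule orthogonal_to_subspace_exists_gen) blast
  have "Re (cinner x (c *s F $ k)) = 0" for c k
    using x(2)[OF span_base, of "c *s F $ k"] synthesis_axis[of F k c]
    by (metis inner_eq_Re_cinner orthogonal_def rangeI)
  \<comment> \<open>real orthogonality to f_k and to \<i> f_k is complex orthogonality to f_k\<close>
  from this[of 1] this[of \<i>] have "cinner x (F $ k) = 0" for k
    by (simp add: cinner_scale_right complex_eq_iff)
  with x(1) show thesis by (rule that)
qed

lemma frame_orthogonal_eq_0:
  assumes "is_frame F" "\<And>k. cinner x (F $ k) = 0"
  shows "x = 0"
proof -
  obtain c where c: "x = synthesis F c"
    using assms(1) by (metis is_frame_iff_surj_synthesis surjD)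
  have "cinner x x = 0"
    by (subst (2) c) (simp add: synthesis_def cinner_sum_right cinner_scale_right assms(2))
  then show ?thesis by simp
qed

lemma analysis_nth [simp]: "analysis F x $ k = cinner x (F $ k)"
  by (simp add: analysis_def)

lemma analysis_scale: "analysis F (c *s x) = c *s analysis F x"
  by (simp add: vec_eq_iff cinner_scale_left)

lemma frame_analysis_inj:
  assumes "is_frame F" "analysis F x = analysis F y"
  shows "x = y"
  using frame_orthogonal_eq_0[OF assms(1), of "x - y"] assms(2)
  by (simp add: analysis_def vec_eq_iff cinner_diff_left)

lemma magnitude_injective_imp_frame:
  assumes "magnitude_injective F"
  shows "is_frame F"
proof (rule ccontr)
  assume "\<not> is_frame F"
  then obtain x where "x \<noteq> 0" "\<And>k. cinner x (F $ k) = 0"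
    using not_frame_obtains_orthogonal by blast
  then have "\<forall>k. cmod (cinner x (F $ k)) = cmod (cinner 0 (F $ k))"
    by simp
  with assms obtain c where "0 = c *s x" "cmod c = 1"
    unfolding magnitude_injective_def by blast
  with \<open>x \<noteq> 0\<close> show False
    by (metis norm_zero vector_mul_eq_0 zero_neq_one)
qed

definition magnitude_injective_on :: "(complex ^ 'm) set \<Rightarrow> bool" where
  "magnitude_injective_on W \<longleftrightarrow>
     (\<forall>u\<in>W. \<forall>v\<in>W. (\<forall>k. cmod (u $ k) = cmod (v $ k)) \<longrightarrow> (\<exists>c. cmod c = 1 \<and> v = c *s u))"

lemma magnitude_injective_iff_coeff_range:
  assumes "is_frame F"
  shows "magnitude_injective F \<longleftrightarrow> magnitude_injective_on (coeff_range F)"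
proof
  assume inj: "magnitude_injective F"
  show "magnitude_injective_on (coeff_range F)"
    unfolding magnitude_injective_on_def coeff_range_def
  proof clarify
    fix x y
    assume "\<forall>k. cmod (analysis F x $ k) = cmod (analysis F y $ k)"
    with inj obtain c where "cmod c = 1" "y = c *s x"
      unfolding magnitude_injective_def analysis_nth by blast
    then show "\<exists>c. cmod c = 1 \<and> analysis F y = c *s analysis F x"
      by (auto simp: analysis_scale)
  qed
next
  assume inj: "magnitude_injective_on (coeff_range F)"
  show "magnitude_injective F"
    unfolding magnitude_injective_def
  proof clarify
    fix x y
    assume "\<forall>k. cmod (cinner x (F $ k)) = cmod (cinner y (F $ k))"
    then have "\<forall>k. cmod (analysis F x $ k) = cmod (analysis F y $ k)"
      by simp
    with inj obtain c where c: "cmod c = 1" "analysis F y = analysis F (c *s x)"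
      unfolding magnitude_injective_on_def coeff_range_def analysis_scale by blast
    then show "\<exists>c. cmod c = 1 \<and> y = c *s x"
      using frame_analysis_inj[OF assms] by blast
  qed
qed

section \<open>Magnitude injectivity is an open condition\<close>

lemma Re_add_mult_cnj_diff: "Re ((u + v) * cnj (u - v)) = (cmod u)\<^sup>2 - (cmod v)\<^sup>2"
  unfolding cmod_power2 by (simp add: algebra_simps power2_eq_square)

definition phase_ambiguity :: "complex ^ 'n ^ 'm \<Rightarrow> complex ^ 'n \<Rightarrow> complex ^ 'n \<Rightarrow> bool" where
  "phase_ambiguity F s d \<longleftrightarrow> (\<forall>k. Re (cinner s (F $ k) * cnj (cinner d (F $ k))) = 0)"

text \<open>The condition Im <d, s> = 0 excludes d in \<i>\<real> s, for which s + d and s - d differ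
  only by a phase.\<close>

definition normalized_pairs :: "((complex ^ 'n) \<times> (complex ^ 'n)) set" where
  "normalized_pairs = {(s, d). norm s = 1 \<and> norm d = 1 \<and> Im (cinner d s) = 0}"

lemma phase_ambiguity_imp_not_magnitude_injective:
  assumes "(s, d) \<in> normalized_pairs" "phase_ambiguity F s d"
  shows "\<not> magnitude_injective F"
proof
  assume inj: "magnitude_injective F"
  have "cmod (cinner (s + d) (F $ k)) = cmod (cinner (s - d) (F $ k))" for k
  proof -
    have "Re (4 * (cinner s (F $ k) * cnj (cinner d (F $ k)))) = 0"
      using assms(2) by (simp add: phase_ambiguity_def)
    then have "(cmod (cinner (s + d) (F $ k)))\<^sup>2 = (cmod (cinner (s - d) (F $ k)))\<^sup>2"
      using Re_add_mult_cnj_diff[of "cinner (s + d) (F $ k)" "cinner (s - d) (F $ k)"]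
      by (simp add: cinner_add_left cinner_diff_left algebra_simps)
    then show ?thesis
      by (simp add: power2_eq_iff_nonneg)
  qed
  with inj obtain c where c: "cmod c = 1" "s - d = c *s (s + d)"
    unfolding magnitude_injective_def by blast
  define p where "p = cinner d s"
  have "cinner s s = 1" "cinner d d = 1" "cinner s d = p"
    using assms(1) by (auto simp: normalized_pairs_def cinner_self p_def
      cinner_commute[of s d] complex_eq_iff)
  moreover have "cinner (s - d) s = c * cinner (s + d) s" "cinner (s - d) d = c * cinner (s + d) d"
    by (simp_all only: c(2) cinner_scale_left)
  ultimately have "1 - p = c * (1 + p)" "p - 1 = c * (1 + p)"
    by (simp_all add: cinner_add_left cinner_diff_left p_def add.commute)
  then have "1 - p = p - 1"
    by simp
  then have "p = 1"
    by (simp add: algebra_simps)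
  with \<open>1 - p = c * (1 + p)\<close> have "c = 0"
    by simp
  with c(1) show False
    by simp
qed

lemma phase_ambiguity_add_diff:
  assumes "\<And>k. cmod (cinner x (F $ k)) = cmod (cinner y (F $ k))"
  shows "phase_ambiguity F (x + y) (x - y)"
  using Re_add_mult_cnj_diff assms
  by (simp add: phase_ambiguity_def cinner_add_left cinner_diff_left)

lemma phase_ambiguity_scaleR_left: "phase_ambiguity F s d \<Longrightarrow> phase_ambiguity F (r *\<^sub>R s) d"
  by (simp add: phase_ambiguity_def cinner_scaleR_left mult.assoc)

lemma phase_ambiguity_scaleR_right: "phase_ambiguity F s d \<Longrightarrow> phase_ambiguity F s (r *\<^sub>R d)"
  by (simp add: phase_ambiguity_def cinner_scaleR_left
      mult.left_commute[of _ "complex_of_real r"])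

lemma phase_ambiguity_diff_right:
  "phase_ambiguity F s d \<Longrightarrow> phase_ambiguity F s d' \<Longrightarrow> phase_ambiguity F s (d - d')"
  by (simp add: phase_ambiguity_def cinner_diff_left ring_distribs)

lemma phase_ambiguity_imaginary_multiple: "Re c = 0 \<Longrightarrow> phase_ambiguity F s (c *s s)"
  by (simp add: phase_ambiguity_def cinner_scale_left algebra_simps)

lemma phase_ambiguity_normalize:
  assumes amb: "phase_ambiguity F s d" and "s \<noteq> 0"
    and not_rotation: "\<And>t. d \<noteq> (\<i> * of_real t) *s s"
  shows "\<exists>(s', d')\<in>normalized_pairs. phase_ambiguity F s' d'"
proof -
  define s1 where "s1 = (1 / norm s) *\<^sub>R s"
  have "norm s1 = 1" "cinner s1 s1 = 1"
    using \<open>s \<noteq> 0\<close> by (simp_all add: s1_def cinner_self)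
  define \<rho> where "\<rho> = Im (cinner d s1)"
  define d1 where "d1 = d - (\<i> * of_real \<rho>) *s s1"
  have amb1: "phase_ambiguity F s1 d1"
    unfolding d1_def s1_def
    by (intro phase_ambiguity_diff_right phase_ambiguity_imaginary_multiple
        phase_ambiguity_scaleR_left amb) simp
  have im1: "Im (cinner d1 s1) = 0"
    using \<open>cinner s1 s1 = 1\<close> by (simp add: d1_def \<rho>_def cinner_diff_left cinner_scale_left)
  have "d1 \<noteq> 0"
  proof
    assume "d1 = 0"
    then have "d = (\<i> * of_real (\<rho> / norm s)) *s s"
      by (simp add: d1_def s1_def scaleR_eq_scale_of_real vec_eq_iff)
    with not_rotation show False
      by blast
  qed
  define d2 where "d2 = (1 / norm d1) *\<^sub>R d1"
  have "norm d2 = 1"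
    using \<open>d1 \<noteq> 0\<close> by (simp add: d2_def)
  moreover have "Im (cinner d2 s1) = 0"
    using im1 by (simp add: d2_def cinner_scaleR_left)
  moreover have "phase_ambiguity F s1 d2"
    unfolding d2_def by (rule phase_ambiguity_scaleR_right[OF amb1])
  ultimately show ?thesis
    using \<open>norm s1 = 1\<close> unfolding normalized_pairs_def by blast
qed

lemma not_magnitude_injective_imp_phase_ambiguity:
  assumes "\<not> magnitude_injective F"
  shows "\<exists>(s, d)\<in>normalized_pairs. phase_ambiguity F s d"
proof -
  obtain x y where xy: "\<And>k. cmod (cinner x (F $ k)) = cmod (cinner y (F $ k))"
    and no_phase: "\<And>c. cmod c = 1 \<Longrightarrow> y \<noteq> c *s x"
    using assms unfolding magnitude_injective_def by blast
  have "x + y \<noteq> 0"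
    using no_phase[of "-1"] by (auto simp: vec_eq_iff add_eq_0_iff)
  moreover have "x - y \<noteq> (\<i> * of_real t) *s (x + y)" for t
  proof
    define a where "a = 1 + \<i> * of_real t"
    have "a \<noteq> 0"
      by (simp add: a_def complex_eq_iff)
    assume "x - y = (\<i> * of_real t) *s (x + y)"
    then have "a *s y = cnj a *s x"
      by (simp add: a_def vec_eq_iff algebra_simps)
    then have "y = (cnj a / a) *s x"
      using \<open>a \<noteq> 0\<close> by (simp add: vec_eq_iff field_simps)
    moreover have "cmod (cnj a / a) = 1"
      using \<open>a \<noteq> 0\<close> by (simp add: norm_divide)
    ultimately show False
      using no_phase by blast
  qed
  ultimately show ?thesis
    using phase_ambiguity_normalize[OF phase_ambiguity_add_diff[OF xy]] by blast
qed

lemma not_magnitude_injective_iff_phase_ambiguity: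
  "\<not> magnitude_injective F \<longleftrightarrow> (\<exists>(s, d)\<in>normalized_pairs. phase_ambiguity F s d)"
  using not_magnitude_injective_imp_phase_ambiguity phase_ambiguity_imp_not_magnitude_injective
  by blast

lemma compact_normalized_pairs: "compact normalized_pairs"
proof -
  have "bounded normalized_pairs"
    unfolding bounded_iff normalized_pairs_def
    by (rule exI[where x=2]) (auto simp: norm_Pair intro: less_imp_le[OF sqrt2_less_2])
  moreover have "closed normalized_pairs"
    unfolding normalized_pairs_def case_prod_unfold
    by (intro closed_Collect_conj closed_Collect_eq continuous_intros)
  ultimately show ?thesis
    by (simp add: compact_eq_bounded_closed)
qed

lemma open_magnitude_injective: "open {F :: complex ^ 'n ^ 'm. magnitude_injective F}"
proof -
  have "closed {((s, d), F). phase_ambiguity (F :: complex ^ 'n ^ 'm) s d}"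
    unfolding phase_ambiguity_def case_prod_unfold
    by (intro closed_Collect_all closed_Collect_eq continuous_intros)
  from closed_compact_projection[OF compact_normalized_pairs this]
  have "closed {F :: complex ^ 'n ^ 'm. \<not> magnitude_injective F}"
    unfolding not_magnitude_injective_iff_phase_ambiguity by (simp add: Bex_def case_prod_unfold)
  then show ?thesis
    by (simp add: closed_def Compl_eq)
qed

section \<open>Non-injective frames form a null set\<close>

lemma cmod_eq_obtains_unimodular:
  assumes "cmod a = cmod b"
  obtains c where "cmod c = 1" "a = c * b"
proof (cases "b = 0")
  case True
  with assms show thesis
    using that[of 1] by simp
next
  case False
  with assms show thesis
    using that[of "a / b"] by (simp add: norm_divide)
qed

lemma cis_Arg_unimodular:
  assumes "cmod z = 1"
  shows "cis (Arg z) = z"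
proof -
  have "z \<noteq> 0"
    using assms by auto
  with assms show ?thesis
    by (simp add: cis_Arg sgn_div_norm)
qed

lemma obtains_inj_on_avoiding:
  assumes "finite A" "card A < CARD('b)"
  obtains e :: "'a \<Rightarrow> 'b::finite" and k0 where "inj_on e A" "k0 \<notin> e ` A"
proof -
  fix k0 :: 'b
  have "card A \<le> card (UNIV - {k0})"
    using assms(2) by (simp add: card_Diff_subset)
  then have "\<exists>e. e ` A \<subseteq> UNIV - {k0} \<and> inj_on e A"
    by (intro card_le_inj assms(1)) simp
  then obtain e where "inj_on e A" "k0 \<notin> e ` A"
    by blast
  then show thesis
    by (rule that)
qed

lemma bounded_linear_differentiable_compose:
  "bounded_linear h \<Longrightarrow> f differentiable F \<Longrightarrow> (\<lambda>x. h (f x)) differentiable F"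
  unfolding differentiable_def using bounded_linear.has_derivative by blast

lemma differentiable_vec_lambda:
  fixes f :: "'a::real_normed_vector \<Rightarrow> 'b::euclidean_space ^ 'n"
  assumes "\<And>i. (\<lambda>x. f x $ i) differentiable (at a within S)"
  shows "f differentiable (at a within S)"
  unfolding differentiable_componentwise_within[of f]
proof
  fix b :: "'b ^ 'n"
  assume "b \<in> Basis"
  then obtain i u where "u \<in> Basis" "b = axis i u"
    by (auto simp: Basis_vec_def)
  then have "(\<lambda>x. f x \<bullet> b) = (\<lambda>x. f x $ i \<bullet> u)"
    by (simp add: inner_axis)
  then show "(\<lambda>x. f x \<bullet> b) differentiable (at a within S)"
    using bounded_linear_differentiable_compose[OF bounded_linear_inner_left assms] by simp
qed

lemma differentiable_Complex:
  assumes "f differentiable F" "g differentiable F"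
  shows "(\<lambda>x. Complex (f x) (g x)) differentiable F"
proof -
  have "(\<lambda>x. of_real (f x) + \<i> * of_real (g x)) differentiable F"
    using bounded_linear_differentiable_compose[OF bounded_linear_of_real assms(1)]
      bounded_linear_differentiable_compose[OF bounded_linear_mult_right
        bounded_linear_differentiable_compose[OF bounded_linear_of_real assms(2)]]
    by (rule differentiable_add)
  then show ?thesis
    by (simp add: Complex_eq)
qed

lemma differentiable_cis:
  assumes "f differentiable (at a within S)"
  shows "(\<lambda>x. cis (f x)) differentiable (at a within S)"
proof -
  have "(\<lambda>x. \<i> * of_real (f x)) differentiable (at a within S)"
    using bounded_linear_differentiable_compose[OF bounded_linear_mult_right
        bounded_linear_differentiable_compose[OF bounded_linear_of_real assms]] .
  then have "(\<lambda>x. exp (\<i> * of_real (f x))) differentiable (at a within S)"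
    by (rule differentiable_compose[OF field_differentiable_imp_differentiable,
          OF field_differentiable_within_exp])
  then show ?thesis
    by (simp add: cis_conv_exp)
qed

lemma differentiable_cinner:
  assumes "\<And>t. (\<lambda>x. u x $ t) differentiable (at a within S)"
    and "\<And>t. (\<lambda>x. v x $ t) differentiable (at a within S)"
  shows "(\<lambda>x. cinner (u x) (v x)) differentiable (at a within S)"
  unfolding cinner_def
  by (intro differentiable_sum ballI finite differentiable_mult assms
      bounded_linear_differentiable_compose[OF bounded_linear_cnj])

lemma normalized_ambiguity_witness:
  assumes xy: "\<And>k. cmod (cinner x (F $ k)) = cmod (cinner y (F $ k))"
    and no_phase: "\<And>c. cmod c = 1 \<Longrightarrow> y \<noteq> c *s x"
    and "x \<noteq> 0"
  obtains j x' y' c i where "x' $ j = 1" "Im (y' $ j) = 0" "\<And>k. cmod (c k) = 1"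
    "\<And>k. cinner x' (F $ k) = c k * cinner y' (F $ k)" "\<And>k. (x' - c k *s y') $ i k \<noteq> 0"
proof -
  obtain j where "x $ j \<noteq> 0"
    using \<open>x \<noteq> 0\<close> by (auto simp: vec_eq_iff)
  define a where "a = 1 / x $ j"
  obtain u where u: "cmod u = 1" "of_real (cmod (a * y $ j)) = u * (a * y $ j)"
    by (rule cmod_eq_obtains_unimodular[of "of_real (cmod (a * y $ j))" "a * y $ j"]) simp
  define x' where "x' = a *s x"
  define y' where "y' = (a * u) *s y"
  have "x' $ j = 1"
    using \<open>x $ j \<noteq> 0\<close> by (simp add: x'_def a_def)
  have "y' $ j = u * (a * y $ j)"
    by (simp add: y'_def ac_simps)
  then have "Im (y' $ j) = 0"
    by (simp flip: u(2))
  have "cmod (cinner x' (F $ k)) = cmod (cinner y' (F $ k))" for k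
    using xy[of k] u(1) by (simp add: x'_def y'_def cinner_scale_left norm_mult)
  then have "\<forall>k. \<exists>c. cmod c = 1 \<and> cinner x' (F $ k) = c * cinner y' (F $ k)"
    by (metis cmod_eq_obtains_unimodular)
  then obtain c where
    c: "\<And>k. cmod (c k) = 1" "\<And>k. cinner x' (F $ k) = c k * cinner y' (F $ k)"
    by metis
  have "x' - c k *s y' \<noteq> 0" for k
  proof
    assume "x' - c k *s y' = 0"
    then have "y = (1 / (c k * u)) *s x"
      using \<open>x $ j \<noteq> 0\<close> c(1)[of k] u(1)
      by (auto simp: x'_def y'_def a_def vec_eq_iff field_simps)
    moreover have "cmod (1 / (c k * u)) = 1"
      using c(1)[of k] u(1) by (simp add: norm_divide norm_mult)
    ultimately show False
      using no_phase by blast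
  qed
  then have "\<forall>k. \<exists>t. (x' - c k *s y') $ t \<noteq> 0"
    by (simp add: vec_eq_iff)
  then obtain i where "\<And>k. (x' - c k *s y') $ i k \<noteq> 0"
    by metis
  with \<open>x' $ j = 1\<close> \<open>Im (y' $ j) = 0\<close> c show thesis
    by (rule that)
qed

lemma not_magnitude_injective_obtains_witness:
  assumes "\<not> magnitude_injective F"
  obtains j x y c i where "x $ j = 1" "Im (y $ j) = 0" "\<And>k. cmod (c k) = 1"
    "\<And>k. cinner x (F $ k) = c k * cinner y (F $ k)" "\<And>k. (x - c k *s y) $ i k \<noteq> 0"
proof -
  obtain x y where xy: "\<And>k. cmod (cinner x (F $ k)) = cmod (cinner y (F $ k))"
    and no_phase: "\<And>c. cmod c = 1 \<Longrightarrow> y \<noteq> c *s x"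
    using assms unfolding magnitude_injective_def by blast
  show thesis
  proof (cases "x = 0")
    case False
    with xy no_phase show thesis
      using that by (rule normalized_ambiguity_witness)
  next
    case True
    then have "y \<noteq> 0"
      using no_phase[of 1] by auto
    have no_phase': "x \<noteq> c *s y" if "cmod c = 1" for c
      using True \<open>y \<noteq> 0\<close> that by (auto simp: vec_eq_iff)
    from xy[symmetric] no_phase' \<open>y \<noteq> 0\<close> that show thesis
      by (rule normalized_ambiguity_witness)
  qed
qed

text \<open>The label (t, b, im) stands for the real (im = False) or imaginary part of coordinate t of
  x (b = False) or y (b = True); the three labels removed are fixed by x_j = 1 and Im y_j = 0.\<close>

definition free_params :: "'n \<Rightarrow> ('n \<times> bool \<times> bool) set" where
  "free_params j = UNIV - {(j, False, False), (j, False, True), (j, True, True)}"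

lemma card_free_params: "card (free_params (j :: 'n::finite)) = 4 * CARD('n) - 3"
proof -
  have "CARD('n \<times> bool \<times> bool) = 4 * CARD('n)"
    by (simp add: card_UNIV_bool)
  then show ?thesis
    by (simp add: free_params_def card_Diff_subset)
qed

text \<open>Layout of a point G of the chart domain: the pivot entry G_{k, i k} of row k holds the
  argument of c_k in its real part and, if k = e p, the parameter p in its imaginary part; the
  other entries of row k hold g_k.  The chart is used on the hyperplane Im G_{k0, i k0} = 0 for a
  row k0 outside the range of e.\<close>

definition chart_param ::
    "('n \<times> bool \<times> bool \<Rightarrow> 'm) \<Rightarrow> ('m \<Rightarrow> 'n) \<Rightarrow> complex ^ 'n ^ 'm \<Rightarrow> 'n \<times> bool \<times> bool \<Rightarrow> real" where
  "chart_param e i G p = Im (G $ e p $ i (e p))"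

definition chart_x ::
    "'n \<Rightarrow> ('n \<times> bool \<times> bool \<Rightarrow> 'm) \<Rightarrow> ('m \<Rightarrow> 'n) \<Rightarrow> complex ^ 'n ^ 'm \<Rightarrow> complex ^ 'n" where
  "chart_x j e i G = (\<chi> t. if t = j then 1
     else Complex (chart_param e i G (t, False, False)) (chart_param e i G (t, False, True)))"

definition chart_y ::
    "'n \<Rightarrow> ('n \<times> bool \<times> bool \<Rightarrow> 'm) \<Rightarrow> ('m \<Rightarrow> 'n) \<Rightarrow> complex ^ 'n ^ 'm \<Rightarrow> complex ^ 'n" where
  "chart_y j e i G = (\<chi> t. Complex (chart_param e i G (t, True, False))
     (if t = j then 0 else chart_param e i G (t, True, True)))"

definition chart_w ::
    "'n \<Rightarrow> ('n \<times> bool \<times> bool \<Rightarrow> 'm) \<Rightarrow> ('m \<Rightarrow> 'n) \<Rightarrow> complex ^ 'n ^ 'm \<Rightarrow> 'm \<Rightarrow> complex ^ 'n" where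
  "chart_w j e i G k = chart_x j e i G - cis (Re (G $ k $ i k)) *s chart_y j e i G"

definition chart_g :: "('m \<Rightarrow> 'n) \<Rightarrow> complex ^ 'n ^ 'm \<Rightarrow> 'm \<Rightarrow> complex ^ 'n" where
  "chart_g i G k = (\<chi> t. if t = i k then 0 else G $ k $ t)"

text \<open>|w|^2 times the orthogonal projection of g onto the complement of w, written without
  division so that it is smooth in w.\<close>

definition perp_scaled :: "complex ^ 'n \<Rightarrow> complex ^ 'n \<Rightarrow> complex ^ 'n" where
  "perp_scaled w g = cinner w w *s g - cinner g w *s w"

definition ambiguity_chart ::
    "'n \<Rightarrow> ('n \<times> bool \<times> bool \<Rightarrow> 'm) \<Rightarrow> ('m \<Rightarrow> 'n) \<Rightarrow> complex ^ 'n ^ 'm \<Rightarrow> complex ^ 'n ^ 'm" where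
  "ambiguity_chart j e i G = (\<chi> k. perp_scaled (chart_w j e i G k) (chart_g i G k))"

lemma differentiable_ambiguity_chart:
  fixes G0 :: "complex ^ 'n ^ 'm"
  shows "ambiguity_chart j e i differentiable (at G0)"
proof -
  have entry: "(\<lambda>G::complex ^ 'n ^ 'm. G $ k $ t) differentiable (at G0)" for k t
    by (intro bounded_linear_imp_differentiable
        bounded_linear_compose[OF bounded_linear_vec_nth bounded_linear_vec_nth])
  have param: "(\<lambda>G. chart_param e i G p) differentiable (at G0)" for p
    unfolding chart_param_def
    by (rule bounded_linear_differentiable_compose[OF bounded_linear_Im entry])
  have x: "(\<lambda>G. chart_x j e i G $ t) differentiable (at G0)" for t
    by (cases "t = j") (simp_all add: chart_x_def differentiable_Complex param)
  have y: "(\<lambda>G. chart_y j e i G $ t) differentiable (at G0)" for t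
    by (cases "t = j") (simp_all add: chart_y_def differentiable_Complex param)
  have w: "(\<lambda>G. chart_w j e i G k $ t) differentiable (at G0)" for k t
    unfolding chart_w_def using x y
    by (simp add: differentiable_cis
        bounded_linear_differentiable_compose[OF bounded_linear_Re entry])
  have g: "(\<lambda>G. chart_g i G k $ t) differentiable (at G0)" for k t
    by (cases "t = i k") (simp_all add: chart_g_def entry)
  show ?thesis
    unfolding ambiguity_chart_def perp_scaled_def
    by (intro differentiable_vec_lambda) (simp add: differentiable_cinner w g)
qed

lemma negligible_ambiguity_chart_image:
  "negligible (ambiguity_chart j e i ` {G :: complex ^ 'n ^ 'm. Im (G $ k0 $ i k0) = 0})"
proof (rule negligible_differentiable_image_negligible)
  let ?a = "axis k0 (axis (i k0) \<i>) :: complex ^ 'n ^ 'm"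
  have "{G :: complex ^ 'n ^ 'm. Im (G $ k0 $ i k0) = 0} = {G. ?a \<bullet> G = 0}"
    by (auto simp: inner_commute[of ?a] inner_axis inner_complex_def)
  then show "negligible {G :: complex ^ 'n ^ 'm. Im (G $ k0 $ i k0) = 0}"
    using negligible_hyperplane[of ?a 0] by simp
  show "ambiguity_chart j e i differentiable_on {G. Im (G $ k0 $ i k0) = 0}"
    unfolding differentiable_on_def
    using differentiable_ambiguity_chart differentiable_at_withinI by blast
qed simp

lemma perp_scaled_onto_orthogonal:
  assumes "w $ t \<noteq> 0" "cinner v w = 0"
  shows "\<exists>g. g $ t = 0 \<and> perp_scaled w g = v"
proof -
  have "w \<noteq> 0"
    using assms(1) by auto
  define a where "a = v $ t / w $ t"
  define g where "g = (1 / cinner w w) *s (v - a *s w)"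
  have "g $ t = 0"
    using assms(1) by (simp add: g_def a_def)
  moreover have "cinner g w = - a"
    using \<open>w \<noteq> 0\<close> assms(2) by (simp add: g_def cinner_scale_left cinner_diff_left)
  then have "perp_scaled w g = v"
    using \<open>w \<noteq> 0\<close> by (auto simp: perp_scaled_def g_def vec_eq_iff algebra_simps)
  with \<open>g $ t = 0\<close> show ?thesis
    by blast
qed

lemma ambiguity_chart_covers:
  fixes F :: "complex ^ 'n ^ 'm"
  assumes e: "inj_on e (free_params j)" "k0 \<notin> e ` free_params j"
    and x: "x $ j = 1" and y: "Im (y $ j) = 0" and c: "\<And>k. cmod (c k) = 1"
    and amb: "\<And>k. cinner x (F $ k) = c k * cinner y (F $ k)"
    and pivot: "\<And>k. (x - c k *s y) $ i k \<noteq> 0"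
  shows "F \<in> ambiguity_chart j e i ` {G. Im (G $ k0 $ i k0) = 0}"
proof -
  define w where "w k = x - c k *s y" for k
  have "cinner (F $ k) (w k) = 0" for k
    using amb[of k] by (subst cinner_commute) (simp add: w_def cinner_diff_left cinner_scale_left)
  then have "\<forall>k. \<exists>g. g $ i k = 0 \<and> perp_scaled (w k) g = F $ k"
    using perp_scaled_onto_orthogonal pivot unfolding w_def by blast
  then obtain g where g: "\<And>k. g k $ i k = 0" "\<And>k. perp_scaled (w k) (g k) = F $ k"
    by metis
  define coord where "coord p = (case p of (t, b, im) \<Rightarrow>
      (if im then Im else Re) ((if b then y else x) $ t))" for p
  define G :: "complex ^ 'n ^ 'm" where "G = (\<chi> k t. if t = i k
      then Complex (Arg (c k))
        (if k \<in> e ` free_params j then coord (inv_into (free_params j) e k) else 0)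
      else g k $ t)"
  have "chart_param e i G p = coord p" if "p \<in> free_params j" for p
    using that e(1) by (simp add: chart_param_def G_def)
  moreover have "(j, True, False) \<in> free_params j" "t \<noteq> j \<Longrightarrow> (t, b, im) \<in> free_params j"
    for t b im
    by (auto simp: free_params_def)
  ultimately have "chart_x j e i G = x" "chart_y j e i G = y"
    using x y by (auto simp: vec_eq_iff chart_x_def chart_y_def coord_def complex_eq_iff)
  moreover have "cis (Re (G $ k $ i k)) = c k" for k
    using c[of k] by (simp add: G_def cis_Arg_unimodular)
  ultimately have "chart_w j e i G k = w k" for k
    by (simp add: chart_w_def w_def)
  moreover have "chart_g i G k = g k" for k
    using g(1) by (auto simp: chart_g_def G_def vec_eq_iff)
  ultimately have "ambiguity_chart j e i G = F"
    by (simp add: ambiguity_chart_def g(2) vec_nth_inverse)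
  moreover have "Im (G $ k0 $ i k0) = 0"
    using e(2) by (simp add: G_def)
  ultimately show ?thesis
    by blast
qed

lemma negligible_not_magnitude_injective:
  assumes "CARD('m::finite) \<ge> 4 * CARD('n::finite) - 2"
  shows "negligible {F :: complex ^ 'n ^ 'm. \<not> magnitude_injective F}"
proof -
  have "card (free_params j) < CARD('m)" for j :: 'n
    using assms card_free_params[of j] finite_UNIV_card_ge_0[where 'a='n, OF finite] by linarith
  then have "\<forall>j. \<exists>(e :: 'n \<times> bool \<times> bool \<Rightarrow> 'm) k0.
      inj_on e (free_params j) \<and> k0 \<notin> e ` free_params j"
    by (meson finite obtains_inj_on_avoiding)
  then obtain e :: "'n \<Rightarrow> 'n \<times> bool \<times> bool \<Rightarrow> 'm" and k0 :: "'n \<Rightarrow> 'm"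
    where e: "\<And>j. inj_on (e j) (free_params j)" "\<And>j. k0 j \<notin> e j ` free_params j"
    by metis
  let ?chart_image = "\<lambda>(j, i). ambiguity_chart j (e j) i ` {G. Im (G $ k0 j $ i (k0 j)) = 0}"
  have "{F. \<not> magnitude_injective F} \<subseteq> \<Union> (?chart_image ` UNIV)"
  proof
    fix F :: "complex ^ 'n ^ 'm"
    assume "F \<in> {F. \<not> magnitude_injective F}"
    then have "\<not> magnitude_injective F"
      by simp
    then obtain j x y c i where "x $ j = 1" "Im (y $ j) = 0" "\<And>k. cmod (c k) = 1"
      "\<And>k. cinner x (F $ k) = c k * cinner y (F $ k)" "\<And>k. (x - c k *s y) $ i k \<noteq> 0"
      by (rule not_magnitude_injective_obtains_witness) blast
    then have "F \<in> ambiguity_chart j (e j) i ` {G. Im (G $ k0 j $ i (k0 j)) = 0}"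
      by (rule ambiguity_chart_covers[OF e(1) e(2)])
    then show "F \<in> \<Union> (?chart_image ` UNIV)"
      by (intro UN_I[where a="(j, i)"]) simp_all
  qed
  moreover have "negligible (\<Union> (?chart_image ` UNIV))"
    by (rule negligible_Union) (auto simp: negligible_ambiguity_chart_image)
  ultimately show ?thesis
    using negligible_subset by blast
qed

lemma negligible_Compl_imp_closure_UNIV:
  fixes S :: "'a::euclidean_space set"
  assumes "negligible (- S)"
  shows "closure S = UNIV"
proof -
  have "interior (- S) = {}"
    using negligible_subset[OF assms interior_subset] open_not_negligible[OF open_interior] by blast
  then show ?thesis
    by (simp add: closure_interior)
qed

theorem theorem3p3:
  assumes "CARD('m::finite) \<ge> 4 * CARD('n::finite) - 2"
  shows "generic_frames (magnitude_injective :: complex ^ 'n ^ 'm \<Rightarrow> bool)"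
proof -
  define S where "S = {F :: complex ^ 'n ^ 'm. magnitude_injective F}"
  have "S \<subseteq> frames"
    by (auto simp: S_def frames_def magnitude_injective_imp_frame)
  moreover have "openin (top_of_set frames) S"
    using open_subset[OF \<open>S \<subseteq> frames\<close>] open_magnitude_injective by (simp add: S_def)
  moreover have "\<forall>F\<in>frames. \<forall>G\<in>frames. coeff_range F = coeff_range G \<longrightarrow> (F \<in> S \<longleftrightarrow> G \<in> S)"
    by (simp add: S_def frames_def magnitude_injective_iff_coeff_range)
  moreover have "frames \<subseteq> closure S"
    using negligible_Compl_imp_closure_UNIV[of S] negligible_not_magnitude_injective[OF assms]
    by (simp add: S_def Collect_neg_eq)
  moreover have "\<forall>F\<in>S. magnitude_injective F"
    by (simp add: S_def)
  ultimately show ?thesis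
    unfolding generic_frames_def by (intro exI[of _ S] conjI) assumption+
qed

end
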